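(* Let $M$ be a finite rectangular monoid, $k$ a splitting field for $M$, and $X,Y\in\Lambda(M)$ with $X\le Y$. Let $U,V$ be simple $kG_X$-, $kG_Y$-modules, respectively (viewed as simple modules for $kM$, $kM_\ell$ and $kM_r$). Then the number of arrows from $U$ to $V$ in $Q(kM)$ equals the number of arrows from $U$ to $V$ in $Q(kM_\ell)$, and the number of arrows from $V$ to $U$ in $Q(kM)$ equals the number of arrows from $V$ to $U$ in $Q(kM_r)$.
   Context: $M$ finite monoid, $E(M)$ its idempotents, $m^\omega$ the idempotent power of $m$. $M$ is rectangular if each set $\{f\in E(M): MfM=MeM\}$ is closed under multiplication. $\Lambda(M)$: ideals $MeM$, $e\in E(M)$, ordered by inclusion; $\sigma(m)=Mm^\omega M$. Fix $e_X$ with $Me_XM=X$; $G_X$ is the group of units of $e_XMe_X$; a $kG_X$-module is a $kM$-module via $m\mapsto e_Xme_X$ if $\sigma(m)\supseteq X$ and $m\mapsto 0$ otherwise. A two-element right (resp. left) zero subsemigroup is $\{e,f\}$, $e\ne f$, with $ef=f,fe=e$ (resp. $ef=e,fe=f$). $M_\ell$ (resp. $M_r$) is the quotient of $M$ by the smallest congruence identifying the two elements of each two-element right (resp. left) zero subsemigroup; the map $m\mapsto(\sigma(m),\rho_{\sigma(m)}(m))$ to the associated Clifford monoid factors through $M_\ell$ and $M_r$, so $M,M_\ell,M_r$ have the same simple modules (those inflated from the $G_X$). $k$ splits $M$ if $kM/\mathrm{rad}(kM)$ is a product of matrix algebras over $k$. Quiver: $\dim\mathrm{Ext}^1(S,T)$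 arrows $S\to T$. *)

theory Defs
  imports "HOL-Algebra.Group" "Jordan_Normal_Form.Matrix" "HOL-Library.Function_Algebras"
begin

definition idems :: "('a, 'b) monoid_scheme \<Rightarrow> 'a set" where
  "idems M = {e \<in> carrier M. e \<otimes>\<^bsub>M\<^esub> e = e}"

definition pideal :: "('a, 'b) monoid_scheme \<Rightarrow> 'a \<Rightarrow> 'a set" where
  "pideal M x = {a \<otimes>\<^bsub>M\<^esub> x \<otimes>\<^bsub>M\<^esub> b | a b. a \<in> carrier M \<and> b \<in> carrier M}"

definition rectangular :: "('a, 'b) monoid_scheme \<Rightarrow> bool" where
  "rectangular M \<longleftrightarrow> (\<forall>e \<in> idems M. \<forall>f \<in> idems M. \<forall>g \<in> idems M.
      pideal M f = pideal M e \<and> pideal M g = pideal M e \<longrightarrow>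
      f \<otimes>\<^bsub>M\<^esub> g \<in> idems M \<and> pideal M (f \<otimes>\<^bsub>M\<^esub> g) = pideal M e)"

definition Lambda :: "('a, 'b) monoid_scheme \<Rightarrow> 'a set set" where
  "Lambda M = pideal M ` idems M"

text \<open>The idempotent power m^omega (unique in a finite monoid).\<close>
definition omega_pow :: "('a, 'b) monoid_scheme \<Rightarrow> 'a \<Rightarrow> 'a" where
  "omega_pow M m = (THE e. e \<in> idems M \<and> (\<exists>n::nat. n \<ge> 1 \<and> e = m [^]\<^bsub>M\<^esub> n))"

definition sigma :: "('a, 'b) monoid_scheme \<Rightarrow> 'a \<Rightarrow> 'a set" where
  "sigma M m = pideal M (omega_pow M m)"

text \<open>G_X for X = M e M: the group of units of the monoid e M e (identity e).\<close>
definition local_group :: "('a, 'b) monoid_scheme \<Rightarrow> 'a \<Rightarrow> 'a monoid" where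
  "local_group M e =
    (let eMe = {e \<otimes>\<^bsub>M\<^esub> m \<otimes>\<^bsub>M\<^esub> e | m. m \<in> carrier M} in
     \<lparr> carrier = {g \<in> eMe. \<exists>h \<in> eMe. g \<otimes>\<^bsub>M\<^esub> h = e \<and> h \<otimes>\<^bsub>M\<^esub> g = e},
       mult = mult M, one = e \<rparr>)"

definition is_congruence :: "('a, 'b) monoid_scheme \<Rightarrow> ('a \<times> 'a) set \<Rightarrow> bool" where
  "is_congruence M R \<longleftrightarrow> equiv (carrier M) R \<and>
     (\<forall>a b c d. (a, b) \<in> R \<and> (c, d) \<in> R \<longrightarrow> (a \<otimes>\<^bsub>M\<^esub> c, b \<otimes>\<^bsub>M\<^esub> d) \<in> R)"

definition cong_gen :: "('a, 'b) monoid_scheme \<Rightarrow> ('a \<times> 'a) set \<Rightarrow> ('a \<times> 'a) set" where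
  "cong_gen M P = \<Inter> {R. is_congruence M R \<and> P \<subseteq> R}"

definition right_zero_pairs :: "('a, 'b) monoid_scheme \<Rightarrow> ('a \<times> 'a) set" where
  "right_zero_pairs M = {(e, f). e \<in> carrier M \<and> f \<in> carrier M \<and> e \<noteq> f \<and>
      e \<otimes>\<^bsub>M\<^esub> f = f \<and> f \<otimes>\<^bsub>M\<^esub> e = e}"

definition left_zero_pairs :: "('a, 'b) monoid_scheme \<Rightarrow> ('a \<times> 'a) set" where
  "left_zero_pairs M = {(e, f). e \<in> carrier M \<and> f \<in> carrier M \<and> e \<noteq> f \<and>
      e \<otimes>\<^bsub>M\<^esub> f = e \<and> f \<otimes>\<^bsub>M\<^esub> e = f}"

definition quot_monoid :: "('a, 'b) monoid_scheme \<Rightarrow> ('a \<times> 'a) set \<Rightarrow> 'a set monoid" where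
  "quot_monoid M R =
     \<lparr> carrier = carrier M // R,
       mult = (\<lambda>A B. R `` {(SOME a. a \<in> A) \<otimes>\<^bsub>M\<^esub> (SOME b. b \<in> B)}),
       one = R `` {\<one>\<^bsub>M\<^esub>} \<rparr>"

definition M_l :: "('a, 'b) monoid_scheme \<Rightarrow> 'a set monoid" where
  "M_l M = quot_monoid M (cong_gen M (right_zero_pairs M))"

definition M_r :: "('a, 'b) monoid_scheme \<Rightarrow> 'a set monoid" where
  "M_r M = quot_monoid M (cong_gen M (left_zero_pairs M))"

definition is_rep :: "('a, 'b) monoid_scheme \<Rightarrow> ('a \<Rightarrow> 'k::field mat) \<Rightarrow> nat \<Rightarrow> bool" where
  "is_rep G \<rho> n \<longleftrightarrow> (\<forall>x \<in> carrier G. \<rho> x \<in> carrier_mat n n) \<and> \<rho> \<one>\<^bsub>G\<^esub> = 1\<^sub>m n \<and>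
     (\<forall>x \<in> carrier G. \<forall>y \<in> carrier G. \<rho> (x \<otimes>\<^bsub>G\<^esub> y) = \<rho> x * \<rho> y)"

definition invariant_subspace ::
  "('a, 'b) monoid_scheme \<Rightarrow> ('a \<Rightarrow> 'k::field mat) \<Rightarrow> nat \<Rightarrow> 'k vec set \<Rightarrow> bool" where
  "invariant_subspace G \<rho> n W \<longleftrightarrow> W \<subseteq> carrier_vec n \<and> 0\<^sub>v n \<in> W \<and>
     (\<forall>v \<in> W. \<forall>w \<in> W. v + w \<in> W) \<and> (\<forall>c. \<forall>v \<in> W. c \<cdot>\<^sub>v v \<in> W) \<and>
     (\<forall>x \<in> carrier G. \<forall>v \<in> W. \<rho> x *\<^sub>v v \<in> W)"

definition simple_rep :: "('a, 'b) monoid_scheme \<Rightarrow> ('a \<Rightarrow> 'k::field mat) \<Rightarrow> nat \<Rightarrow> bool" where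
  "simple_rep G \<rho> n \<longleftrightarrow> is_rep G \<rho> n \<and> n > 0 \<and>
     (\<forall>W. invariant_subspace G \<rho> n W \<longrightarrow> W = {0\<^sub>v n} \<or> W = carrier_vec n)"

text \<open>k splits M: every simple kM-module S has End_{kM}(S) = k
  (equivalently kM/rad kM is a product of matrix algebras over k).\<close>
definition splits :: "'k::field itself \<Rightarrow> ('a, 'b) monoid_scheme \<Rightarrow> bool" where
  "splits (TYPE('k)) M \<longleftrightarrow> (\<forall>(\<rho> :: 'a \<Rightarrow> 'k mat) n. simple_rep M \<rho> n \<longrightarrow>
     (\<forall>A \<in> carrier_mat n n. (\<forall>x \<in> carrier M. A * \<rho> x = \<rho> x * A) \<longrightarrow>
        (\<exists>c. A = c \<cdot>\<^sub>m 1\<^sub>m n)))"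

definition infl :: "('a, 'b) monoid_scheme \<Rightarrow> 'a \<Rightarrow> ('a \<Rightarrow> 'k::field mat) \<Rightarrow> nat \<Rightarrow> 'a \<Rightarrow> 'k mat" where
  "infl M e \<rho> n m = (if pideal M e \<subseteq> sigma M m then \<rho> (e \<otimes>\<^bsub>M\<^esub> m \<otimes>\<^bsub>M\<^esub> e) else 0\<^sub>m n n)"

text \<open>The same module viewed as a module over a quotient monoid M/R (well defined
  since the action factors through the quotient).\<close>
definition infl_quot :: "('a, 'b) monoid_scheme \<Rightarrow> 'a \<Rightarrow> ('a \<Rightarrow> 'k::field mat) \<Rightarrow> nat \<Rightarrow> 'a set \<Rightarrow> 'k mat" where
  "infl_quot M e \<rho> n A = infl M e \<rho> n (SOME m. m \<in> A)"

text \<open>Ext^1(S,T) is computed as derivations M \<rightarrow> Hom_k(S,T) modulo inner derivations;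
  a derivation is stored as a function on M with values (t x s)-matrices given by entry functions,
  zero outside the carrier and outside the index range.\<close>

definition to_mat :: "nat \<Rightarrow> nat \<Rightarrow> (nat \<Rightarrow> nat \<Rightarrow> 'k) \<Rightarrow> 'k mat" where
  "to_mat t s f = mat t s (\<lambda>(i, j). f i j)"

definition cocycles ::
  "('a, 'b) monoid_scheme \<Rightarrow> ('a \<Rightarrow> 'k::field mat) \<Rightarrow> nat \<Rightarrow> ('a \<Rightarrow> 'k mat) \<Rightarrow> nat
     \<Rightarrow> ('a \<Rightarrow> nat \<Rightarrow> nat \<Rightarrow> 'k) set" where
  "cocycles M \<rho>S s \<rho>T t = {d.
     (\<forall>x. x \<notin> carrier M \<longrightarrow> d x = 0) \<and>
     (\<forall>x i j. (i \<ge> t \<or> j \<ge> s) \<longrightarrow> d x i j = 0) \<and>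
     (\<forall>x \<in> carrier M. \<forall>y \<in> carrier M.
        to_mat t s (d (x \<otimes>\<^bsub>M\<^esub> y)) = \<rho>T x * to_mat t s (d y) + to_mat t s (d x) * \<rho>S y)}"

definition coboundaries ::
  "('a, 'b) monoid_scheme \<Rightarrow> ('a \<Rightarrow> 'k::field mat) \<Rightarrow> nat \<Rightarrow> ('a \<Rightarrow> 'k mat) \<Rightarrow> nat
     \<Rightarrow> ('a \<Rightarrow> nat \<Rightarrow> nat \<Rightarrow> 'k) set" where
  "coboundaries M \<rho>S s \<rho>T t = {d. \<exists>B \<in> carrier_mat t s. \<forall>x.
     d x = (if x \<in> carrier M
            then (\<lambda>i j. if i < t \<and> j < s then (\<rho>T x * B - B * \<rho>S x) $$ (i, j) else 0)
            else 0)}"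

definition fscale :: "'k::field \<Rightarrow> ('a \<Rightarrow> nat \<Rightarrow> nat \<Rightarrow> 'k) \<Rightarrow> ('a \<Rightarrow> nat \<Rightarrow> nat \<Rightarrow> 'k)" where
  "fscale c d = (\<lambda>x i j. c * d x i j)"

text \<open>dim_k Ext^1_{kM}(S,T) = number of arrows S \<rightarrow> T in the quiver Q(kM).\<close>
definition ext1_dim ::
  "('a, 'b) monoid_scheme \<Rightarrow> ('a \<Rightarrow> 'k::field mat) \<Rightarrow> nat \<Rightarrow> ('a \<Rightarrow> 'k mat) \<Rightarrow> nat \<Rightarrow> nat" where
  "ext1_dim M \<rho>S s \<rho>T t =
     vector_space.dim fscale (cocycles M \<rho>S s \<rho>T t) - vector_space.dim fscale (coboundaries M \<rho>S s \<rho>T t)"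

end

theory Submission
  imports Defs
begin

text \<open>In a rectangular monoid, idempotents a, b of one J-class satisfy aba = a and, with a third
  one c, abc = ac. Hence e m e is a unit of eMe exactly when MeM \<subseteq> M m^\<omega> M, and m \<mapsto> e m e is
  multiplicative on such m, so inflation yields representations of M. Moreover a two-element left
  or right zero subsemigroup {a, b} consists of J-equivalent idempotents, on which every inflated
  module acts by the same scalar, 1 or 0.

  Let d be a derivation of M with values in Hom(U, V) and (a, b) a right zero pair. If U and V both
  act on a by 1, or both by 0, then d a = d (a a) forces d a = 0 = d b. Since X \<le> Y, the only other
  case is U acting by 1 and V by 0, and then d b = d (a b) = d a. So the representations and all
  derivations are constant on the classes of the congruence defining M_l, and pulling back
  along M \<rightarrow> M_l identifies the derivations and the inner derivations of the two monoids.
  The arrows V \<rightarrow> U and M_r are handled dually.\<close>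

section \<open>Principal ideals and units of corner monoids\<close>

context monoid
begin

lemma pideal_memI: "x \<in> carrier G \<Longrightarrow> a \<in> carrier G \<Longrightarrow> b \<in> carrier G \<Longrightarrow> a \<otimes> x \<otimes> b \<in> pideal G x"
  unfolding pideal_def by blast

lemma pideal_self: "x \<in> carrier G \<Longrightarrow> x \<in> pideal G x"
  using pideal_memI[of x \<one> \<one>] by simp

lemma pideal_subset:
  assumes x: "x \<in> carrier G" and y: "y \<in> pideal G x"
  shows "pideal G y \<subseteq> pideal G x"
proof
  fix z assume "z \<in> pideal G y"
  then obtain c d where cd: "c \<in> carrier G" "d \<in> carrier G" "z = c \<otimes> y \<otimes> d"
    unfolding pideal_def by blast
  from y obtain a b where ab: "a \<in> carrier G" "b \<in> carrier G" "y = a \<otimes> x \<otimes> b"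
    unfolding pideal_def by blast
  have "z = (c \<otimes> a) \<otimes> x \<otimes> (b \<otimes> d)" using ab cd x by (simp add: m_assoc)
  then show "z \<in> pideal G x" using ab cd x pideal_memI by simp
qed

lemma pideal_eqI:
  "x \<in> carrier G \<Longrightarrow> y \<in> carrier G \<Longrightarrow> x \<in> pideal G y \<Longrightarrow> y \<in> pideal G x \<Longrightarrow> pideal G x = pideal G y"
  using pideal_subset by blast

lemma idemsD:
  assumes "e \<in> idems G" shows "e \<in> carrier G" "e \<otimes> e = e"
  using assms unfolding idems_def by auto

lemma idemsI: "e \<in> carrier G \<Longrightarrow> e \<otimes> e = e \<Longrightarrow> e \<in> idems G"
  unfolding idems_def by simp

lemma idem_mult_absorb: "e \<otimes> e = e \<Longrightarrow> e \<in> carrier G \<Longrightarrow> z \<in> carrier G \<Longrightarrow> e \<otimes> (e \<otimes> z) = e \<otimes> z"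
  by (simp add: m_assoc[symmetric])

lemma nat_pow_idem: "e \<in> carrier G \<Longrightarrow> e \<otimes> e = e \<Longrightarrow> (k::nat) \<ge> 1 \<Longrightarrow> e [^] k = e"
proof (induction k)
  case (Suc k) then show ?case by (cases k) auto
qed simp

definition corner_unit :: "'a \<Rightarrow> 'a \<Rightarrow> bool" where
  "corner_unit e g \<longleftrightarrow> (\<exists>r\<in>carrier G. e \<otimes> r = r \<and> r \<otimes> e = r \<and> g \<otimes> r = e \<and> r \<otimes> g = e)"

lemma corner_unit_mult:
  assumes e: "e \<in> carrier G" and g: "g \<in> carrier G" "corner_unit e g" and h: "h \<in> carrier G" "corner_unit e h"
  shows "corner_unit e (g \<otimes> h)"
proof -
  obtain r where r: "r \<in> carrier G" "e \<otimes> r = r" "r \<otimes> e = r" "g \<otimes> r = e" "r \<otimes> g = e"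
    using g unfolding corner_unit_def by blast
  obtain s where s: "s \<in> carrier G" "e \<otimes> s = s" "s \<otimes> e = s" "h \<otimes> s = e" "s \<otimes> h = e"
    using h unfolding corner_unit_def by blast
  have "g \<otimes> h \<otimes> (s \<otimes> r) = g \<otimes> (h \<otimes> s) \<otimes> r" "s \<otimes> r \<otimes> (g \<otimes> h) = s \<otimes> (r \<otimes> g) \<otimes> h"
    using r(1) s(1) g(1) h(1) by (simp_all add: m_assoc)
  then have "g \<otimes> h \<otimes> (s \<otimes> r) = e" "s \<otimes> r \<otimes> (g \<otimes> h) = e"
    using r s g h e by (simp_all add: m_assoc)
  moreover have "e \<otimes> (s \<otimes> r) = s \<otimes> r" "s \<otimes> r \<otimes> e = s \<otimes> r"
    using r s e by (simp_all add: m_assoc[symmetric]) (simp add: m_assoc)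
  ultimately show ?thesis unfolding corner_unit_def using r s by (intro bexI[of _ "s \<otimes> r"]) auto
qed

lemma corner_unit_in_local_group:
  assumes e: "e \<in> idems G" and m: "m \<in> carrier G" and u: "corner_unit e (e \<otimes> m \<otimes> e)"
  shows "e \<otimes> m \<otimes> e \<in> carrier (local_group G e)"
proof -
  obtain r where r: "r \<in> carrier G" "e \<otimes> r = r" "r \<otimes> e = r" "(e \<otimes> m \<otimes> e) \<otimes> r = e" "r \<otimes> (e \<otimes> m \<otimes> e) = e"
    using u unfolding corner_unit_def by blast
  have "r = e \<otimes> r \<otimes> e" using r by simp
  then have "r \<in> {e \<otimes> x \<otimes> e | x. x \<in> carrier G}" using r(1) by blast
  moreover have "e \<otimes> m \<otimes> e \<in> {e \<otimes> x \<otimes> e | x. x \<in> carrier G}" using m by blast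
  ultimately show ?thesis unfolding local_group_def Let_def using r by auto
qed

end

section \<open>Finite and rectangular monoids\<close>

locale finite_monoid = monoid +
  assumes finite_carrier: "finite (carrier G)"
begin

lemma exists_idem_power:
  assumes m: "m \<in> carrier G"
  shows "\<exists>k::nat\<ge>1. m [^] k \<otimes> m [^] k = m [^] k"
proof -
  have "\<not> inj_on (\<lambda>i::nat. m [^] i) {..card (carrier G)}"
  proof
    assume "inj_on (\<lambda>i::nat. m [^] i) {..card (carrier G)}"
    then have "card ((\<lambda>i::nat. m [^] i) ` {..card (carrier G)}) = Suc (card (carrier G))"
      by (simp add: card_image)
    moreover have "card ((\<lambda>i::nat. m [^] i) ` {..card (carrier G)}) \<le> card (carrier G)"
      using m finite_carrier by (intro card_mono) auto
    ultimately show False by simp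
  qed
  then obtain i j :: nat where ij: "i < j" "m [^] i = m [^] j"
    unfolding inj_on_def by (metis linorder_neqE_nat)
  define p where "p = j - i"
  have p: "p \<ge> 1" "m [^] (i + p) = m [^] i" using ij p_def by auto
  have periodic: "m [^] (i + q + k * p) = m [^] (i + q)" for q k
  proof (induction k)
    case (Suc k)
    have "m [^] (i + q + Suc k * p) = m [^] (i + p) \<otimes> m [^] (q + k * p)"
      using m by (simp add: nat_pow_mult algebra_simps)
    also have "\<dots> = m [^] (i + q + k * p)" using m p by (simp add: nat_pow_mult algebra_simps)
    finally show ?case using Suc by simp
  qed simp
  define n where "n = (i + 1) * p"
  have "n = p + i * p" "i \<le> i * p" using p unfolding n_def by simp_all
  then have "i \<le> n" "1 \<le> n" using p by linarith+
  then obtain q where q: "n = i + q" using le_Suc_ex by blast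
  have "m [^] n \<otimes> m [^] n = m [^] (i + q + (i + 1) * p)"
    using m q by (simp add: nat_pow_mult n_def algebra_simps)
  also have "\<dots> = m [^] n" using periodic[of q "i + 1"] q by simp
  finally show ?thesis using \<open>1 \<le> n\<close> by blast
qed

lemma omega_pow_props:
  assumes m: "m \<in> carrier G"
  shows "omega_pow G m \<in> idems G" "\<exists>n::nat\<ge>1. omega_pow G m = m [^] n"
proof -
  obtain k :: nat where k: "k \<ge> 1" "m [^] k \<otimes> m [^] k = m [^] k" using exists_idem_power[OF m] by blast
  have "m [^] n = m [^] k" if "n \<ge> 1" "m [^] n \<otimes> m [^] n = m [^] n" for n :: nat
  proof -
    have "m [^] n = (m [^] n) [^] k" using nat_pow_idem that k m by simp
    also have "\<dots> = (m [^] k) [^] n" using m by (simp add: nat_pow_pow mult.commute)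
    also have "\<dots> = m [^] k" using nat_pow_idem that k m by simp
    finally show ?thesis .
  qed
  then have "\<exists>!e. e \<in> idems G \<and> (\<exists>n::nat. n \<ge> 1 \<and> e = m [^] n)"
    using k m idemsI idemsD(2) by (intro ex1I[of _ "m [^] k"]) (blast, metis)
  from theI'[OF this] show "omega_pow G m \<in> idems G" "\<exists>n::nat\<ge>1. omega_pow G m = m [^] n"
    unfolding omega_pow_def by blast+
qed

lemma omega_pow_idem: "e \<in> idems G \<Longrightarrow> omega_pow G e = e"
  using omega_pow_props(2)[of e] nat_pow_idem idemsD by force

text \<open>Left multiplication by r is injective on the finite set eGe, hence surjective.\<close>
lemma corner_right_inverse_is_left_inverse:
  assumes e: "e \<in> carrier G" "e \<otimes> e = e"
    and y: "y \<in> carrier G" "e \<otimes> y = y" "y \<otimes> e = y"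
    and r: "r \<in> carrier G" "e \<otimes> r = r" "r \<otimes> e = r"
    and yr: "y \<otimes> r = e"
  shows "r \<otimes> y = e"
proof -
  let ?A = "{z \<in> carrier G. e \<otimes> z = z \<and> z \<otimes> e = z}"
  have "(\<lambda>z. r \<otimes> z) ` ?A \<subseteq> ?A"
    using r e by (auto simp: m_assoc[symmetric]) (simp add: m_assoc)
  moreover have "inj_on (\<lambda>z. r \<otimes> z) ?A"
  proof (rule inj_onI)
    fix z1 z2 assume "z1 \<in> ?A" "z2 \<in> ?A" "r \<otimes> z1 = r \<otimes> z2"
    then have "(y \<otimes> r) \<otimes> z1 = (y \<otimes> r) \<otimes> z2" using y r by (simp add: m_assoc)
    then show "z1 = z2" using yr \<open>z1 \<in> ?A\<close> \<open>z2 \<in> ?A\<close> by simp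
  qed
  moreover have "e \<in> ?A" using e by simp
  ultimately have "e \<in> (\<lambda>z. r \<otimes> z) ` ?A" using endo_inj_surj[of ?A] finite_carrier by auto
  then obtain z where z: "z \<in> carrier G" "e \<otimes> z = z" "z \<otimes> e = z" "r \<otimes> z = e" by blast
  have "y = y \<otimes> (r \<otimes> z)" using y z by simp
  also have "\<dots> = (y \<otimes> r) \<otimes> z" using y r z by (simp add: m_assoc)
  also have "\<dots> = z" using yr z by simp
  finally show ?thesis using z by simp
qed

text \<open>Stability of finite monoids: if x is L-below a and a is J-below x, then a is L-below x.\<close>
lemma stable_left:
  assumes a: "a \<in> carrier G" and x: "x \<in> carrier G" and p: "p \<in> carrier G" and q: "q \<in> carrier G"
    and xa: "x \<otimes> a = x" and apxq: "a = p \<otimes> x \<otimes> q"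
  shows "\<exists>s\<in>carrier G. a = s \<otimes> x"
proof -
  have pxaq: "p \<otimes> x \<otimes> a \<otimes> q = a" using xa apxq p x a q by (simp add: m_assoc)
  have iterate: "a = (p \<otimes> x) [^] k \<otimes> a \<otimes> q [^] k" for k :: nat
  proof (induction k)
    case (Suc k)
    have "(p \<otimes> x) [^] Suc k \<otimes> a \<otimes> q [^] Suc k = (p \<otimes> x) [^] k \<otimes> (p \<otimes> x \<otimes> a \<otimes> q) \<otimes> q [^] k"
      using p q x a nat_pow_Suc2[of q k] by (simp add: m_assoc)
    then show ?case using pxaq Suc.IH by simp
  qed (use a in simp)
  obtain k :: nat where k: "k \<ge> 1" "(p \<otimes> x) [^] k \<otimes> (p \<otimes> x) [^] k = (p \<otimes> x) [^] k"
    using exists_idem_power[of "p \<otimes> x"] p x by auto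
  define E where "E = (p \<otimes> x) [^] k"
  have "E \<otimes> a = (E \<otimes> E) \<otimes> a \<otimes> q [^] k"
    using iterate[of k] p q x a unfolding E_def by (metis m_assoc m_closed nat_pow_closed)
  also have "\<dots> = a" using k iterate[of k] unfolding E_def by simp
  finally have Ea: "E \<otimes> a = a" .
  obtain k' where k': "k = Suc k'" using k by (cases k) auto
  have "E \<otimes> a = ((p \<otimes> x) [^] k' \<otimes> p) \<otimes> (x \<otimes> a)"
    unfolding E_def k' using p x a by (simp add: m_assoc)
  then show ?thesis using Ea xa p x by (intro bexI[of _ "(p \<otimes> x) [^] k' \<otimes> p"]) auto
qed

end

locale finite_rectangular_monoid = finite_monoid +
  assumes rectangular: "rectangular G"
begin

lemma J_idems_mult:
  assumes "e \<in> idems G" "f \<in> idems G" "h \<in> idems G" "pideal G f = pideal G e" "pideal G h = pideal G e"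
  shows "f \<otimes> h \<in> idems G" "pideal G (f \<otimes> h) = pideal G e"
  using rectangular assms unfolding rectangular_def by blast+

lemma J_idems_sandwich:
  assumes a: "a \<in> idems G" and b: "b \<in> idems G" and ab: "pideal G a = pideal G b"
  shows "a \<otimes> b \<otimes> a = a"
proof -
  note ac = idemsD[OF a] and bc = idemsD[OF b]
  define x where "x = a \<otimes> b \<otimes> a"
  have x: "x \<in> idems G" "pideal G x = pideal G a"
    using J_idems_mult[OF a J_idems_mult(1)[OF a a b refl ab[symmetric]] a
        J_idems_mult(2)[OF a a b refl ab[symmetric]] refl]
    unfolding x_def by auto
  note xc = idemsD[OF x(1)]
  have ax: "a \<otimes> x = x" "x \<otimes> a = x" unfolding x_def using ac bc
    by (simp_all add: m_assoc idem_mult_absorb)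
  have "a \<in> pideal G x" using x(2) pideal_self ac by simp
  then obtain p q where "p \<in> carrier G" "q \<in> carrier G" "a = p \<otimes> x \<otimes> q" unfolding pideal_def by blast
  then obtain s where s: "s \<in> carrier G" "a = s \<otimes> x" using stable_left[of a x p q] ac xc ax by blast
  have "a \<otimes> x = a" using s xc by (simp add: m_assoc)
  then show ?thesis using ax x_def by simp
qed

lemma J_idems_rectangular_band:
  assumes e: "e \<in> idems G" and a: "a \<in> idems G" "pideal G a = pideal G e"
    and b: "b \<in> idems G" "pideal G b = pideal G e"
    and c: "c \<in> idems G" "pideal G c = pideal G e"
  shows "a \<otimes> b \<otimes> c = a \<otimes> c"
proof -
  have abc: "a \<in> carrier G" "b \<in> carrier G" "c \<in> carrier G" using a b c idemsD by auto
  note AC = J_idems_mult[OF e a(1) c(1) a(2) c(2)]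
  note AB = J_idems_mult[OF e a(1) b(1) a(2) b(2)]
  note ABC = J_idems_mult[OF e AB(1) c(1) AB(2) c(2)]
  have ac: "pideal G a = pideal G c" using a(2) c(2) by simp
  have "a \<otimes> b \<otimes> c = (a \<otimes> c \<otimes> a) \<otimes> b \<otimes> (c \<otimes> a \<otimes> c)"
    using J_idems_sandwich[OF a(1) c(1) ac] J_idems_sandwich[OF c(1) a(1) ac[symmetric]] by simp
  also have "\<dots> = (a \<otimes> c) \<otimes> (a \<otimes> b \<otimes> c) \<otimes> (a \<otimes> c)" using abc by (simp add: m_assoc)
  also have "\<dots> = a \<otimes> c" using J_idems_sandwich[OF AC(1) ABC(1)] AC(2) ABC(2) by simp
  finally show ?thesis .
qed

end

context finite_rectangular_monoid
begin

lemma right_factor_idem: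
  assumes e: "e \<in> idems G" and m: "m \<in> carrier G" and w: "w \<in> carrier G" and emw: "e \<otimes> m \<otimes> w = e"
  shows "w \<otimes> e \<otimes> m \<in> idems G" "pideal G (w \<otimes> e \<otimes> m) = pideal G e" "e \<otimes> m \<otimes> (w \<otimes> e \<otimes> m) = e \<otimes> m"
proof -
  note ec = idemsD[OF e]
  have emw': "e \<otimes> (m \<otimes> (w \<otimes> z)) = e \<otimes> z" if "z \<in> carrier G" for z
    using emw ec m w that by (metis m_assoc m_closed)
  have emw0: "e \<otimes> (m \<otimes> w) = e" using emw ec m w by (simp add: m_assoc)
  show "e \<otimes> m \<otimes> (w \<otimes> e \<otimes> m) = e \<otimes> m"
    using w ec m by (simp add: m_assoc emw' idem_mult_absorb)
  show f: "w \<otimes> e \<otimes> m \<in> idems G"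
    using w ec m by (intro idemsI) (simp_all add: m_assoc emw' idem_mult_absorb)
  have "e = e \<otimes> m \<otimes> (w \<otimes> e \<otimes> m) \<otimes> w"
    using w ec m by (simp add: m_assoc emw' idem_mult_absorb emw0)
  then have "e \<in> pideal G (w \<otimes> e \<otimes> m)"
    using pideal_memI[of "w \<otimes> e \<otimes> m" "e \<otimes> m" w] ec m w by simp
  moreover have "w \<otimes> e \<otimes> m \<in> pideal G e" using pideal_memI w ec m by simp
  ultimately show "pideal G (w \<otimes> e \<otimes> m) = pideal G e" using pideal_eqI ec(1) idemsD(1)[OF f] by blast
qed

lemma left_factor_idem:
  assumes e: "e \<in> idems G" and m: "m \<in> carrier G" and w: "w \<in> carrier G" and wme: "w \<otimes> m \<otimes> e = e"
  shows "m \<otimes> e \<otimes> w \<in> idems G" "pideal G (m \<otimes> e \<otimes> w) = pideal G e" "(m \<otimes> e \<otimes> w) \<otimes> (m \<otimes> e) = m \<otimes> e"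
proof -
  note ec = idemsD[OF e]
  have wme': "w \<otimes> (m \<otimes> (e \<otimes> z)) = e \<otimes> z" if "z \<in> carrier G" for z
    using wme ec m w that by (metis m_assoc m_closed)
  have wme0: "w \<otimes> (m \<otimes> e) = e" using wme ec m w by (simp add: m_assoc)
  show "(m \<otimes> e \<otimes> w) \<otimes> (m \<otimes> e) = m \<otimes> e"
    using w ec m by (simp add: m_assoc wme' idem_mult_absorb wme0)
  show h: "m \<otimes> e \<otimes> w \<in> idems G"
    using w ec m by (intro idemsI) (simp_all add: m_assoc wme' idem_mult_absorb)
  have "e = w \<otimes> (m \<otimes> e \<otimes> w) \<otimes> (m \<otimes> e)"
    using w ec m by (simp add: m_assoc wme' idem_mult_absorb wme0)
  then have "e \<in> pideal G (m \<otimes> e \<otimes> w)"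
    using pideal_memI[of "m \<otimes> e \<otimes> w" w "m \<otimes> e"] ec m w by simp
  moreover have "m \<otimes> e \<otimes> w \<in> pideal G e" using pideal_memI m ec w by simp
  ultimately show "pideal G (m \<otimes> e \<otimes> w) = pideal G e" using pideal_eqI ec(1) idemsD(1)[OF h] by blast
qed

lemma corner_unit_if_right_factor:
  assumes e: "e \<in> idems G" and m: "m \<in> carrier G" and w: "w \<in> carrier G" and emw: "e \<otimes> m \<otimes> w = e"
  shows "corner_unit e (e \<otimes> m \<otimes> e)"
proof -
  note ec = idemsD[OF e]
  define f where "f = w \<otimes> e \<otimes> m"
  note F = right_factor_idem[OF e m w emw, folded f_def]
  note fc = idemsD(1)[OF F(1)]
  have fef: "f \<otimes> e \<otimes> f = f" using J_idems_sandwich[OF F(1) e F(2)] .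
  have "e = (e \<otimes> m \<otimes> f) \<otimes> w" using emw F(3) by simp
  also have "\<dots> = (e \<otimes> m) \<otimes> (f \<otimes> e \<otimes> f) \<otimes> w" using fef by simp
  also have "\<dots> = (e \<otimes> m \<otimes> f) \<otimes> e \<otimes> (f \<otimes> w)" using ec m w fc by (simp add: m_assoc)
  also have "\<dots> = (e \<otimes> m \<otimes> e) \<otimes> (f \<otimes> w)" using F(3) ec m w fc by (simp add: m_assoc)
  finally have inv: "e = (e \<otimes> m \<otimes> e) \<otimes> (f \<otimes> w)" .
  define r where "r = e \<otimes> (f \<otimes> w) \<otimes> e"
  have rc: "r \<in> carrier G" "e \<otimes> r = r" "r \<otimes> e = r"
    unfolding r_def using ec fc w by (simp_all add: m_assoc idem_mult_absorb)
  have "(e \<otimes> m \<otimes> e) \<otimes> r = ((e \<otimes> m \<otimes> e) \<otimes> (f \<otimes> w)) \<otimes> e"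
    unfolding r_def using ec fc w m by (simp add: m_assoc idem_mult_absorb)
  then have yr: "(e \<otimes> m \<otimes> e) \<otimes> r = e" using inv[symmetric] ec by simp
  have "r \<otimes> (e \<otimes> m \<otimes> e) = e"
    by (rule corner_right_inverse_is_left_inverse[OF ec _ _ _ rc yr])
      (use ec m in \<open>simp_all add: m_assoc idem_mult_absorb\<close>)
  then show ?thesis unfolding corner_unit_def using rc yr by blast
qed

lemma corner_unit_if_left_factor:
  assumes e: "e \<in> idems G" and m: "m \<in> carrier G" and w: "w \<in> carrier G" and wme: "w \<otimes> m \<otimes> e = e"
  shows "corner_unit e (e \<otimes> m \<otimes> e)"
proof -
  note ec = idemsD[OF e]
  define h where "h = m \<otimes> e \<otimes> w"
  note H = left_factor_idem[OF e m w wme, folded h_def]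
  note hc = idemsD(1)[OF H(1)]
  have heh: "h \<otimes> e \<otimes> h = h" using J_idems_sandwich[OF H(1) e H(2)] .
  have "m \<otimes> e = (h \<otimes> e \<otimes> h) \<otimes> (m \<otimes> e)" using H(3) heh by simp
  also have "\<dots> = h \<otimes> (e \<otimes> m \<otimes> e)" using H(3) hc ec m by (simp add: m_assoc)
  finally have me: "m \<otimes> e = h \<otimes> (e \<otimes> m \<otimes> e)" .
  have "e = w \<otimes> (m \<otimes> e)" using wme w m ec by (simp add: m_assoc)
  also have "\<dots> = (w \<otimes> h) \<otimes> (e \<otimes> m \<otimes> e)" using me w hc ec m by (simp add: m_assoc)
  finally have inv: "e = (w \<otimes> h) \<otimes> (e \<otimes> m \<otimes> e)" .
  define l where "l = e \<otimes> (w \<otimes> h) \<otimes> e"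
  have lc: "l \<in> carrier G" "e \<otimes> l = l" "l \<otimes> e = l"
    unfolding l_def using ec hc w by (simp_all add: m_assoc idem_mult_absorb)
  have "l \<otimes> (e \<otimes> m \<otimes> e) = e \<otimes> ((w \<otimes> h) \<otimes> (e \<otimes> m \<otimes> e))"
    unfolding l_def using ec hc w m by (simp add: m_assoc idem_mult_absorb)
  then have ly: "l \<otimes> (e \<otimes> m \<otimes> e) = e" using inv[symmetric] ec by simp
  have "(e \<otimes> m \<otimes> e) \<otimes> l = e"
    by (rule corner_right_inverse_is_left_inverse[OF ec lc _ _ _ ly])
      (use ec m in \<open>simp_all add: m_assoc idem_mult_absorb\<close>)
  then show ?thesis unfolding corner_unit_def using lc ly by blast
qed

lemma corner_unit_factors:
  assumes e: "e \<in> idems G" and m: "m \<in> carrier G" and u: "corner_unit e (e \<otimes> m \<otimes> e)"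
  shows "\<exists>w\<in>carrier G. e \<otimes> m \<otimes> w = e" "\<exists>w\<in>carrier G. w \<otimes> m \<otimes> e = e"
proof -
  note ec = idemsD[OF e]
  obtain r where r: "r \<in> carrier G" "(e \<otimes> m \<otimes> e) \<otimes> r = e" "r \<otimes> (e \<otimes> m \<otimes> e) = e"
    using u unfolding corner_unit_def by blast
  have "e \<otimes> m \<otimes> (e \<otimes> r) = e" "(r \<otimes> e) \<otimes> m \<otimes> e = e" using r ec m by (simp_all add: m_assoc)
  then show "\<exists>w\<in>carrier G. e \<otimes> m \<otimes> w = e" "\<exists>w\<in>carrier G. w \<otimes> m \<otimes> e = e"
    using r ec by blast+
qed

lemma corner_mult:
  assumes e: "e \<in> idems G" and m: "m \<in> carrier G" and n: "n \<in> carrier G"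
    and um: "corner_unit e (e \<otimes> m \<otimes> e)" and un: "corner_unit e (e \<otimes> n \<otimes> e)"
  shows "e \<otimes> (m \<otimes> n) \<otimes> e = (e \<otimes> m \<otimes> e) \<otimes> (e \<otimes> n \<otimes> e)"
proof -
  note ec = idemsD[OF e]
  obtain w where w: "w \<in> carrier G" "e \<otimes> m \<otimes> w = e" using corner_unit_factors(1)[OF e m um] by blast
  obtain w' where w': "w' \<in> carrier G" "w' \<otimes> n \<otimes> e = e" using corner_unit_factors(2)[OF e n un] by blast
  define f where "f = w \<otimes> e \<otimes> m"
  define h where "h = n \<otimes> e \<otimes> w'"
  note F = right_factor_idem[OF e m w, folded f_def] and H = left_factor_idem[OF e n w', folded h_def]
  have fc: "f \<in> carrier G" and hc: "h \<in> carrier G" using idemsD F(1) H(1) by auto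
  \<comment> \<open>rectangularity: f and h lie in the J-class of e\<close>
  have feh: "f \<otimes> e \<otimes> h = f \<otimes> h" using J_idems_rectangular_band[OF e F(1,2) e refl H(1,2)] .
  have "e \<otimes> (m \<otimes> n) \<otimes> e = (e \<otimes> m \<otimes> f) \<otimes> (h \<otimes> (n \<otimes> e))"
    using F(3) H(3) ec m n by (simp add: m_assoc)
  also have "\<dots> = (e \<otimes> m) \<otimes> (f \<otimes> e \<otimes> h) \<otimes> (n \<otimes> e)" using feh ec m n fc hc by (simp add: m_assoc)
  also have "\<dots> = (e \<otimes> m \<otimes> f) \<otimes> e \<otimes> (h \<otimes> (n \<otimes> e))" using ec m n fc hc by (simp add: m_assoc)
  also have "\<dots> = (e \<otimes> m \<otimes> e) \<otimes> (e \<otimes> n \<otimes> e)"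
    using F(3) H(3) ec m n by (simp add: m_assoc idem_mult_absorb)
  finally show ?thesis .
qed

lemma corner_unit_mult_iff:
  assumes e: "e \<in> idems G" and m: "m \<in> carrier G" and n: "n \<in> carrier G"
  shows "corner_unit e (e \<otimes> (m \<otimes> n) \<otimes> e) \<longleftrightarrow> corner_unit e (e \<otimes> m \<otimes> e) \<and> corner_unit e (e \<otimes> n \<otimes> e)"
proof
  assume u: "corner_unit e (e \<otimes> (m \<otimes> n) \<otimes> e)"
  obtain w where "w \<in> carrier G" "e \<otimes> (m \<otimes> n) \<otimes> w = e"
    using corner_unit_factors(1)[OF e _ u] m n by auto
  then have "corner_unit e (e \<otimes> m \<otimes> e)"
    using corner_unit_if_right_factor[OF e m, of "n \<otimes> w"] idemsD[OF e] m n by (simp add: m_assoc)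
  moreover obtain w' where "w' \<in> carrier G" "w' \<otimes> (m \<otimes> n) \<otimes> e = e"
    using corner_unit_factors(2)[OF e _ u] m n by auto
  then have "corner_unit e (e \<otimes> n \<otimes> e)"
    using corner_unit_if_left_factor[OF e n, of "w' \<otimes> m"] idemsD[OF e] m n by (simp add: m_assoc)
  ultimately show "corner_unit e (e \<otimes> m \<otimes> e) \<and> corner_unit e (e \<otimes> n \<otimes> e)" ..
next
  assume "corner_unit e (e \<otimes> m \<otimes> e) \<and> corner_unit e (e \<otimes> n \<otimes> e)"
  then show "corner_unit e (e \<otimes> (m \<otimes> n) \<otimes> e)"
    using corner_mult[OF e m n] corner_unit_mult idemsD[OF e] m n by simp
qed

lemma corner_unit_pow:
  assumes e: "e \<in> idems G" and m: "m \<in> carrier G" and u: "corner_unit e (e \<otimes> m \<otimes> e)"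
  shows "k \<ge> 1 \<Longrightarrow> corner_unit e (e \<otimes> m [^] (k::nat) \<otimes> e)"
proof (induction k)
  case (Suc k)
  then show ?case
    using corner_unit_mult_iff[OF e, of "m [^] k" m] u m by (cases "k = 0") auto
qed simp

lemma corner_unit_iff_sigma:
  assumes e: "e \<in> idems G" and m: "m \<in> carrier G"
  shows "corner_unit e (e \<otimes> m \<otimes> e) \<longleftrightarrow> pideal G e \<subseteq> sigma G m"
proof -
  note ec = idemsD[OF e]
  obtain N :: nat where N: "N \<ge> 1" "omega_pow G m = m [^] N" using omega_pow_props(2)[OF m] by blast
  define E where "E = omega_pow G m"
  have E: "E \<in> idems G" "sigma G m = pideal G E"
    using omega_pow_props(1)[OF m] unfolding E_def sigma_def by auto
  note Ec = idemsD[OF E(1)]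
  show ?thesis
  proof
    assume "corner_unit e (e \<otimes> m \<otimes> e)"
    then have "corner_unit e (e \<otimes> E \<otimes> e)" using corner_unit_pow[OF e m _ N(1)] N(2) E_def by simp
    then obtain w where "w \<in> carrier G" "e \<otimes> E \<otimes> w = e"
      using corner_unit_factors(1)[OF e Ec(1)] by blast
    then have "e \<in> pideal G E" using pideal_memI[of E e w] ec Ec by simp
    then show "pideal G e \<subseteq> sigma G m" using E(2) pideal_subset Ec by simp
  next
    assume "pideal G e \<subseteq> sigma G m"
    then have "e \<in> pideal G E" using E(2) pideal_self ec by auto
    then obtain a b where ab: "a \<in> carrier G" "b \<in> carrier G" "a \<otimes> E \<otimes> b = e" unfolding pideal_def by blast
    have aEb': "a \<otimes> (E \<otimes> (b \<otimes> z)) = e \<otimes> z" if "z \<in> carrier G" for z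
      using ab Ec that by (metis m_assoc m_closed)
    have aEb: "a \<otimes> (E \<otimes> b) = e" using ab Ec by (simp add: m_assoc)
    define g where "g = E \<otimes> b \<otimes> e \<otimes> a \<otimes> E"
    have gc: "g \<in> carrier G" using g_def ab Ec ec by simp
    have g: "g \<in> idems G"
      unfolding g_def using ab Ec ec by (intro idemsI) (simp_all add: m_assoc idem_mult_absorb aEb')
    have "a \<otimes> g \<otimes> b = e"
      unfolding g_def using ab Ec ec by (simp add: m_assoc idem_mult_absorb aEb' aEb)
    then have "e \<in> pideal G g" using pideal_memI[of g a b] gc ab by simp
    moreover have "g \<in> pideal G e"
      unfolding g_def using pideal_memI[of e "E \<otimes> b" "a \<otimes> E"] ab Ec ec by (simp add: m_assoc)
    ultimately have "pideal G e = pideal G g" using pideal_eqI gc ec by blast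
    then have ege: "e \<otimes> g \<otimes> e = e" using J_idems_sandwich[OF e g] by simp
    have Eg: "E \<otimes> g = g" unfolding g_def using ab Ec ec by (simp add: m_assoc idem_mult_absorb)
    obtain N' where N': "N = Suc N'" using N(1) by (cases N) auto
    have "e = e \<otimes> (E \<otimes> g) \<otimes> e" using ege Eg by simp
    also have "\<dots> = e \<otimes> m \<otimes> (m [^] N' \<otimes> g \<otimes> e)"
      unfolding E_def N(2) N' using ec m gc nat_pow_Suc2[of m N'] by (simp add: m_assoc)
    finally show "corner_unit e (e \<otimes> m \<otimes> e)"
      using corner_unit_if_right_factor[OF e m, of "m [^] N' \<otimes> g \<otimes> e"] m gc ec by simp
  qed
qed

end

section \<open>Inflated modules\<close>

context finite_rectangular_monoid
begin

lemma infl_eq_corner: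
  assumes e: "e \<in> idems G" and m: "m \<in> carrier G"
  shows "infl G e \<rho> n m = (if corner_unit e (e \<otimes> m \<otimes> e) then \<rho> (e \<otimes> m \<otimes> e) else 0\<^sub>m n n)"
  unfolding infl_def using corner_unit_iff_sigma[OF e m] by simp

lemma is_rep_infl:
  assumes e: "e \<in> idems G" and rep: "is_rep (local_group G e) \<rho> n"
  shows "is_rep G (infl G e \<rho> n) n"
proof -
  note ec = idemsD[OF e]
  have \<rho>: "\<rho> (e \<otimes> m \<otimes> e) \<in> carrier_mat n n" if "m \<in> carrier G" "corner_unit e (e \<otimes> m \<otimes> e)" for m
    using corner_unit_in_local_group[OF e that] rep unfolding is_rep_def by blast
  have car: "infl G e \<rho> n m \<in> carrier_mat n n" if "m \<in> carrier G" for m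
    using \<rho>[OF that] by (simp add: infl_eq_corner[OF e that])
  have "corner_unit e e" unfolding corner_unit_def using ec by blast
  then have "infl G e \<rho> n \<one> = \<rho> e" using infl_eq_corner[OF e one_closed] ec by simp
  also have "\<dots> = 1\<^sub>m n" using rep unfolding is_rep_def local_group_def Let_def by simp
  finally have one: "infl G e \<rho> n \<one> = 1\<^sub>m n" .
  have "infl G e \<rho> n (m \<otimes> k) = infl G e \<rho> n m * infl G e \<rho> n k"
    if m: "m \<in> carrier G" and k: "k \<in> carrier G" for m k
  proof (cases "corner_unit e (e \<otimes> m \<otimes> e) \<and> corner_unit e (e \<otimes> k \<otimes> e)")
    case True
    have "\<rho> (e \<otimes> (m \<otimes> k) \<otimes> e) = \<rho> ((e \<otimes> m \<otimes> e) \<otimes>\<^bsub>local_group G e\<^esub> (e \<otimes> k \<otimes> e))"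
      using corner_mult[OF e m k] True unfolding local_group_def Let_def by simp
    also have "\<dots> = \<rho> (e \<otimes> m \<otimes> e) * \<rho> (e \<otimes> k \<otimes> e)"
      using rep corner_unit_in_local_group[OF e] m k True unfolding is_rep_def by blast
    finally show ?thesis
      using True corner_unit_mult_iff[OF e m k] infl_eq_corner[OF e m_closed[OF m k], of \<rho> n]
        infl_eq_corner[OF e m, of \<rho> n] infl_eq_corner[OF e k, of \<rho> n] by simp
  next
    case False
    then have "infl G e \<rho> n (m \<otimes> k) = 0\<^sub>m n n"
      and "infl G e \<rho> n m = 0\<^sub>m n n \<or> infl G e \<rho> n k = 0\<^sub>m n n"
      using corner_unit_mult_iff[OF e m k] infl_eq_corner[OF e m_closed[OF m k], of \<rho> n]
        infl_eq_corner[OF e m, of \<rho> n] infl_eq_corner[OF e k, of \<rho> n] by auto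
    then show ?thesis using car[OF m] car[OF k] by (auto simp: left_mult_zero_mat right_mult_zero_mat)
  qed
  then show ?thesis unfolding is_rep_def using car one by blast
qed

lemma infl_idem:
  assumes e: "e \<in> idems G" and rep: "is_rep (local_group G e) \<rho> n" and f: "f \<in> idems G"
  shows "infl G e \<rho> n f = (if pideal G e \<subseteq> pideal G f then 1\<^sub>m n else 0\<^sub>m n n)"
proof -
  note ec = idemsD[OF e] and fc = idemsD[OF f]
  have sf: "sigma G f = pideal G f" unfolding sigma_def using omega_pow_idem[OF f] by simp
  show ?thesis
  proof (cases "pideal G e \<subseteq> pideal G f")
    case True
    then have u: "corner_unit e (e \<otimes> f \<otimes> e)" using corner_unit_iff_sigma[OF e fc(1)] sf by simp
    define x where "x = e \<otimes> f \<otimes> e"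
    have xc: "x \<in> carrier G" "x \<otimes> e = x" unfolding x_def using ec fc by (simp_all add: m_assoc)
    have xx: "x \<otimes> x = x" using corner_mult[OF e fc(1) fc(1) u u] fc unfolding x_def by simp
    obtain r where r: "r \<in> carrier G" "x \<otimes> r = e" using u unfolding corner_unit_def x_def by blast
    have "x = x \<otimes> (x \<otimes> r)" using xc r by simp
    also have "\<dots> = (x \<otimes> x) \<otimes> r" using xc(1) r(1) by (simp add: m_assoc)
    also have "\<dots> = e" using xx r by simp
    finally have "x = e" .
    then have "infl G e \<rho> n f = \<rho> e" using infl_eq_corner[OF e fc(1)] u unfolding x_def by simp
    also have "\<dots> = 1\<^sub>m n" using rep unfolding is_rep_def local_group_def Let_def by simp
    finally show ?thesis using True by simp
  qed (simp add: infl_def sf)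
qed

lemma zero_pair_J_idems:
  assumes "(a, b) \<in> right_zero_pairs G \<union> left_zero_pairs G"
  shows "a \<in> idems G" "b \<in> idems G" "pideal G a = pideal G b"
proof -
  have c: "a \<in> carrier G" "b \<in> carrier G"
    and h: "(a \<otimes> b = b \<and> b \<otimes> a = a) \<or> (a \<otimes> b = a \<and> b \<otimes> a = b)"
    using assms unfolding right_zero_pairs_def left_zero_pairs_def by auto
  from h show "a \<in> idems G" "b \<in> idems G" using c by (auto intro!: idemsI) (metis m_assoc)+
  have "a \<in> pideal G b" "b \<in> pideal G a"
    using h pideal_memI[of b a \<one>] pideal_memI[of b \<one> a] pideal_memI[of a b \<one>] pideal_memI[of a \<one> b] c
    by auto
  then show "pideal G a = pideal G b" using pideal_eqI c by blast
qed

lemma infl_zero_pair: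
  assumes e: "e \<in> idems G" and rep: "is_rep (local_group G e) \<rho> n"
    and p: "(a, b) \<in> right_zero_pairs G \<union> left_zero_pairs G"
  shows "infl G e \<rho> n a = (if pideal G e \<subseteq> pideal G a then 1\<^sub>m n else 0\<^sub>m n n)"
    and "infl G e \<rho> n b = (if pideal G e \<subseteq> pideal G a then 1\<^sub>m n else 0\<^sub>m n n)"
  using infl_idem[OF e rep] zero_pair_J_idems[OF p] by simp_all

end

section \<open>Derivations at zero pairs\<close>

lemma to_mat_carrier: "to_mat t s f \<in> carrier_mat t s"
  unfolding to_mat_def by simp

lemma cocycles_to_mat_mult:
  "d \<in> cocycles M S s T t \<Longrightarrow> x \<in> carrier M \<Longrightarrow> y \<in> carrier M \<Longrightarrow>
     to_mat t s (d (x \<otimes>\<^bsub>M\<^esub> y)) = T x * to_mat t s (d y) + to_mat t s (d x) * S y"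
  unfolding cocycles_def by blast

lemma cocycles_eqI:
  assumes d: "d \<in> cocycles M S s T t" and eq: "to_mat t s (d x) = to_mat t s (d y)"
  shows "d x = d y"
proof (intro ext)
  fix i j
  show "d x i j = d y i j"
  proof (cases "i < t \<and> j < s")
    case True
    then show ?thesis using arg_cong[OF eq, of "\<lambda>A. A $$ (i, j)"] unfolding to_mat_def by simp
  next
    case False
    then show ?thesis using d unfolding cocycles_def by auto
  qed
qed

lemma mat_eq_add_self_imp_zero:
  fixes X :: "'a::ring mat"
  assumes X: "X \<in> carrier_mat t s" and eq: "X = X + X"
  shows "X = 0\<^sub>m t s"
proof (rule eq_matI)
  fix i j assume ij: "i < dim_row (0\<^sub>m t s)" "j < dim_col (0\<^sub>m t s)"
  have "X $$ (i, j) = X $$ (i, j) + X $$ (i, j)" using arg_cong[OF eq, of "\<lambda>A. A $$ (i, j)"] ij X by simp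
  then show "X $$ (i, j) = 0\<^sub>m t s $$ (i, j)" using ij by simp
qed (use X in auto)

lemma cocycle_vanishes_at_idem:
  assumes d: "d \<in> cocycles M S s T t" and f: "f \<in> carrier M" "f \<otimes>\<^bsub>M\<^esub> f = f"
    and ST: "(S f = 1\<^sub>m s \<and> T f = 1\<^sub>m t) \<or> (S f = 0\<^sub>m s s \<and> T f = 0\<^sub>m t t)"
  shows "to_mat t s (d f) = 0\<^sub>m t s"
proof -
  have D: "to_mat t s (d f) \<in> carrier_mat t s" by (rule to_mat_carrier)
  have eq: "T f * to_mat t s (d f) + to_mat t s (d f) * S f = to_mat t s (d f)"
    using cocycles_to_mat_mult[OF d f(1) f(1)] f(2) by simp
  from ST show ?thesis
  proof
    assume "S f = 1\<^sub>m s \<and> T f = 1\<^sub>m t"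
    then show ?thesis using mat_eq_add_self_imp_zero[OF D] eq D by simp
  next
    assume "S f = 0\<^sub>m s s \<and> T f = 0\<^sub>m t t"
    then show ?thesis using eq D by (simp add: left_mult_zero_mat right_mult_zero_mat)
  qed
qed

context finite_rectangular_monoid
begin

lemma right_zero_pair_cocycle_eq:
  assumes e1: "e1 \<in> idems G" and e2: "e2 \<in> idems G" and le: "pideal G e1 \<subseteq> pideal G e2"
    and rep1: "is_rep (local_group G e1) \<rho>1 n1" and rep2: "is_rep (local_group G e2) \<rho>2 n2"
    and p: "(a, b) \<in> right_zero_pairs G"
    and d: "d \<in> cocycles G (infl G e1 \<rho>1 n1) n1 (infl G e2 \<rho>2 n2) n2"
  shows "d a = d b"
proof -
  have ab: "a \<in> carrier G" "b \<in> carrier G" "a \<otimes> b = b" using p unfolding right_zero_pairs_def by auto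
  have p': "(a, b) \<in> right_zero_pairs G \<union> left_zero_pairs G" using p by simp
  note J = zero_pair_J_idems[OF p'] and S = infl_zero_pair[OF e1 rep1 p'] and T = infl_zero_pair[OF e2 rep2 p']
  consider "pideal G e1 \<subseteq> pideal G a \<longleftrightarrow> pideal G e2 \<subseteq> pideal G a"
    | "pideal G e1 \<subseteq> pideal G a" "\<not> pideal G e2 \<subseteq> pideal G a"
    using le by blast
  then have "to_mat n2 n1 (d a) = to_mat n2 n1 (d b)"
  proof cases
    case 1
    then show ?thesis using cocycle_vanishes_at_idem[OF d] J idemsD S T by (metis (no_types, lifting))
  next
    case 2
    have "to_mat n2 n1 (d b) = infl G e2 \<rho>2 n2 a * to_mat n2 n1 (d b) + to_mat n2 n1 (d a) * infl G e1 \<rho>1 n1 b"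
      using cocycles_to_mat_mult[OF d ab(1,2)] ab(3) by simp
    also have "\<dots> = to_mat n2 n1 (d a)"
      using 2 S T to_mat_carrier[of n2 n1 "d a"] to_mat_carrier[of n2 n1 "d b"] by (simp add: left_mult_zero_mat)
    finally show ?thesis by simp
  qed
  then show ?thesis using cocycles_eqI[OF d] by blast
qed

lemma left_zero_pair_cocycle_eq:
  assumes e1: "e1 \<in> idems G" and e2: "e2 \<in> idems G" and le: "pideal G e1 \<subseteq> pideal G e2"
    and rep1: "is_rep (local_group G e1) \<rho>1 n1" and rep2: "is_rep (local_group G e2) \<rho>2 n2"
    and p: "(a, b) \<in> left_zero_pairs G"
    and d: "d \<in> cocycles G (infl G e2 \<rho>2 n2) n2 (infl G e1 \<rho>1 n1) n1"
  shows "d a = d b"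
proof -
  have ab: "a \<in> carrier G" "b \<in> carrier G" "a \<otimes> b = a" using p unfolding left_zero_pairs_def by auto
  have p': "(a, b) \<in> right_zero_pairs G \<union> left_zero_pairs G" using p by simp
  note J = zero_pair_J_idems[OF p'] and S = infl_zero_pair[OF e2 rep2 p'] and T = infl_zero_pair[OF e1 rep1 p']
  consider "pideal G e1 \<subseteq> pideal G a \<longleftrightarrow> pideal G e2 \<subseteq> pideal G a"
    | "pideal G e1 \<subseteq> pideal G a" "\<not> pideal G e2 \<subseteq> pideal G a"
    using le by blast
  then have "to_mat n1 n2 (d a) = to_mat n1 n2 (d b)"
  proof cases
    case 1
    then show ?thesis using cocycle_vanishes_at_idem[OF d] J idemsD S T by (metis (no_types, lifting))
  next
    case 2
    have "to_mat n1 n2 (d a) = infl G e1 \<rho>1 n1 a * to_mat n1 n2 (d b) + to_mat n1 n2 (d a) * infl G e2 \<rho>2 n2 b"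
      using cocycles_to_mat_mult[OF d ab(1,2)] ab(3) by simp
    also have "\<dots> = to_mat n1 n2 (d b)"
      using 2 S T to_mat_carrier[of n1 n2 "d a"] to_mat_carrier[of n1 n2 "d b"] by (simp add: right_mult_zero_mat)
    finally show ?thesis .
  qed
  then show ?thesis using cocycles_eqI[OF d] by blast
qed

end

section \<open>Quotients by congruences compatible with the derivations\<close>

lemma dim_image_eq_of_inj_on_span:
  assumes lf: "Vector_Spaces.linear s1 s2 f" and fi: "inj_on f (module.span s1 S)"
  shows "vector_space.dim s2 (f ` S) = vector_space.dim s1 S"
proof -
  interpret lf: Vector_Spaces.linear s1 s2 f by fact
  obtain B where B: "B \<subseteq> S" "lf.vs1.independent B" "S \<subseteq> lf.vs1.span B" "card B = lf.vs1.dim S"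
    using lf.vs1.basis_exists[of S] by auto
  then have "lf.vs1.span S = lf.vs1.span B"
    using lf.vs1.span_mono[of B S] lf.vs1.span_mono[of S "lf.vs1.span B"] lf.vs1.span_span[of B] by auto
  moreover have "card (f ` B) = card B"
    using assms card_image[of f B] inj_on_subset[of f "lf.vs1.span S" B] B lf.vs1.span_superset by auto
  ultimately show ?thesis
    by (metis B(2) B(4) fi lf.dependent_inj_imageD lf.span_image lf.vs2.dim_eq_card_independent lf.vs2.dim_span)
qed

lemma vector_space_fscale: "vector_space (fscale :: 'k::field \<Rightarrow> ('x \<Rightarrow> nat \<Rightarrow> nat \<Rightarrow> 'k) \<Rightarrow> _)"
  by unfold_locales (simp_all add: fscale_def fun_eq_iff algebra_simps)

lemma cong_gen_is_congruence:
  assumes mon: "monoid M" and P: "P \<subseteq> carrier M \<times> carrier M"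
  shows "is_congruence M (cong_gen M P)"
proof -
  let ?F = "{R. is_congruence M R \<and> P \<subseteq> R}"
  have full: "carrier M \<times> carrier M \<in> ?F"
    using P monoid.m_closed[OF mon] unfolding is_congruence_def equiv_def refl_on_def sym_def trans_def by auto
  have E: "equiv (carrier M) R" if "R \<in> ?F" for R using that unfolding is_congruence_def by auto
  have "equiv (carrier M) (\<Inter>?F)"
    unfolding equiv_def refl_on_def sym_def trans_def
  proof (intro conjI)
    show "\<Inter>?F \<subseteq> carrier M \<times> carrier M" using full by blast
    show "\<forall>x\<in>carrier M. (x, x) \<in> \<Inter>?F" using E unfolding equiv_def refl_on_def by blast
    show "\<forall>x y. (x, y) \<in> \<Inter>?F \<longrightarrow> (y, x) \<in> \<Inter>?F" using E unfolding equiv_def sym_def by blast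
    show "\<forall>x y z. (x, y) \<in> \<Inter>?F \<longrightarrow> (y, z) \<in> \<Inter>?F \<longrightarrow> (x, z) \<in> \<Inter>?F"
      using E unfolding equiv_def trans_def by blast
  qed
  then show ?thesis unfolding is_congruence_def cong_gen_def by blast
qed

lemma cong_gen_least: "is_congruence M R \<Longrightarrow> P \<subseteq> R \<Longrightarrow> cong_gen M P \<subseteq> R"
  unfolding cong_gen_def by blast

text \<open>The pairs identified by S, T and all derivations form a congruence.\<close>
lemma cong_gen_compatible:
  assumes mon: "monoid M" and S: "is_rep M S s" and T: "is_rep M T t"
    and P: "\<And>a b. (a, b) \<in> P \<Longrightarrow> a \<in> carrier M \<and> b \<in> carrier M \<and> S a = S b \<and> T a = T b \<and>
                    (\<forall>d\<in>cocycles M S s T t. d a = d b)"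
    and xy: "(x, y) \<in> cong_gen M P"
  shows "S x = S y \<and> T x = T y \<and> (\<forall>d\<in>cocycles M S s T t. d x = d y)"
proof -
  define R where "R = {(x, y). x \<in> carrier M \<and> y \<in> carrier M \<and> S x = S y \<and> T x = T y \<and>
                                (\<forall>d\<in>cocycles M S s T t. d x = d y)}"
  have "is_congruence M R"
    unfolding is_congruence_def
  proof (intro conjI allI impI)
    show "equiv (carrier M) R" unfolding equiv_def refl_on_def sym_def trans_def R_def by auto
  next
    fix a b c d assume "(a, b) \<in> R \<and> (c, d) \<in> R"
    then have ab: "a \<in> carrier M" "b \<in> carrier M" "S a = S b" "T a = T b"
        "\<forall>D\<in>cocycles M S s T t. D a = D b"
      and cd: "c \<in> carrier M" "d \<in> carrier M" "S c = S d" "T c = T d"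
        "\<forall>D\<in>cocycles M S s T t. D c = D d"
      unfolding R_def by auto
    have "D (a \<otimes>\<^bsub>M\<^esub> c) = D (b \<otimes>\<^bsub>M\<^esub> d)" if D: "D \<in> cocycles M S s T t" for D
      using cocycles_eqI[OF D] cocycles_to_mat_mult[OF D] ab cd D by simp
    then show "(a \<otimes>\<^bsub>M\<^esub> c, b \<otimes>\<^bsub>M\<^esub> d) \<in> R"
      using ab cd S T monoid.m_closed[OF mon] unfolding R_def is_rep_def by auto
  qed
  moreover have "P \<subseteq> R" using P unfolding R_def by auto
  ultimately show ?thesis using cong_gen_least[of M R P] xy unfolding R_def by blast
qed

locale compatible_congruence =
  fixes M :: "('a, 'b) monoid_scheme" and C :: "('a \<times> 'a) set"
    and S :: "'a \<Rightarrow> 'k::field mat" and s :: nat and T :: "'a \<Rightarrow> 'k mat" and t :: nat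
  assumes monoid: "monoid M" and congruence: "is_congruence M C"
    and compatible: "(x, y) \<in> C \<Longrightarrow> S x = S y \<and> T x = T y \<and> (\<forall>d\<in>cocycles M S s T t. d x = d y)"
begin

abbreviation Q :: "'a set monoid" where "Q \<equiv> quot_monoid M C"

abbreviation lift :: "('a \<Rightarrow> 'c) \<Rightarrow> 'a set \<Rightarrow> 'c" where "lift f A \<equiv> f (SOME m. m \<in> A)"

definition pullback :: "('a set \<Rightarrow> nat \<Rightarrow> nat \<Rightarrow> 'k) \<Rightarrow> 'a \<Rightarrow> nat \<Rightarrow> nat \<Rightarrow> 'k" where
  "pullback d' x = (if x \<in> carrier M then d' (C `` {x}) else 0)"

lemma equiv_C: "equiv (carrier M) C"
  using congruence unfolding is_congruence_def by simp

lemma carrier_Q: "carrier Q = carrier M // C"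
  unfolding quot_monoid_def by simp

lemma class_rep: "x \<in> carrier M \<Longrightarrow> (x, SOME m. m \<in> C `` {x}) \<in> C"
  using someI[of "\<lambda>m. m \<in> C `` {x}" x] equiv_class_self[OF equiv_C] by simp

lemma mult_Q_classes:
  assumes "x \<in> carrier M" "y \<in> carrier M"
  shows "C `` {x} \<otimes>\<^bsub>Q\<^esub> C `` {y} = C `` {x \<otimes>\<^bsub>M\<^esub> y}"
proof -
  have "(x \<otimes>\<^bsub>M\<^esub> y, (SOME m. m \<in> C `` {x}) \<otimes>\<^bsub>M\<^esub> (SOME m. m \<in> C `` {y})) \<in> C"
    using congruence class_rep assms unfolding is_congruence_def by blast
  then show ?thesis unfolding quot_monoid_def using equiv_class_eq[OF equiv_C] by simp
qed

lemma lift_class: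
  assumes "x \<in> carrier M"
  shows "lift S (C `` {x}) = S x" "lift T (C `` {x}) = T x"
    and "d \<in> cocycles M S s T t \<Longrightarrow> lift d (C `` {x}) = d x"
  using compatible[OF class_rep[OF assms]] by auto

lemma pullback_cocycles: "pullback ` cocycles Q (lift S) s (lift T) t = cocycles M S s T t"
proof
  show "pullback ` cocycles Q (lift S) s (lift T) t \<subseteq> cocycles M S s T t"
  proof
    fix D assume "D \<in> pullback ` cocycles Q (lift S) s (lift T) t"
    then obtain d' where d': "d' \<in> cocycles Q (lift S) s (lift T) t" "D = pullback d'" by blast
    have "to_mat t s (D (x \<otimes>\<^bsub>M\<^esub> y)) = T x * to_mat t s (D y) + to_mat t s (D x) * S y"
      if "x \<in> carrier M" "y \<in> carrier M" for x y
      using cocycles_to_mat_mult[OF d'(1), of "C `` {x}" "C `` {y}"] mult_Q_classes[OF that]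
        that lift_class carrier_Q monoid.m_closed[OF monoid] d'(2) unfolding pullback_def
      by (simp add: quotientI)
    then show "D \<in> cocycles M S s T t"
      using d' unfolding cocycles_def pullback_def by auto
  qed
next
  show "cocycles M S s T t \<subseteq> pullback ` cocycles Q (lift S) s (lift T) t"
  proof
    fix d assume d: "d \<in> cocycles M S s T t"
    define d' where "d' = (\<lambda>A. if A \<in> carrier Q then lift d A else 0)"
    have "pullback d' = d"
      using d lift_class(3)[OF _ d] carrier_Q unfolding pullback_def d'_def cocycles_def
      by (auto simp: fun_eq_iff quotientI)
    moreover have "d' \<in> cocycles Q (lift S) s (lift T) t"
    proof -
      have "to_mat t s (d' (A \<otimes>\<^bsub>Q\<^esub> B)) = lift T A * to_mat t s (d' B) + to_mat t s (d' A) * lift S B"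
        if AB: "A \<in> carrier Q" "B \<in> carrier Q" for A B
      proof -
        obtain a b where ab: "a \<in> carrier M" "A = C `` {a}" "b \<in> carrier M" "B = C `` {b}"
          using AB carrier_Q by (auto elim!: quotientE)
        then have "d' (A \<otimes>\<^bsub>Q\<^esub> B) = d (a \<otimes>\<^bsub>M\<^esub> b)" "d' A = d a" "d' B = d b"
          using mult_Q_classes lift_class(3)[OF _ d] carrier_Q monoid.m_closed[OF monoid]
          unfolding d'_def by (simp_all add: quotientI)
        then show ?thesis using cocycles_to_mat_mult[OF d] ab lift_class by simp
      qed
      then show ?thesis using d unfolding cocycles_def d'_def by auto
    qed
    ultimately show "d \<in> pullback ` cocycles Q (lift S) s (lift T) t" by blast
  qed
qed

lemma pullback_coboundaries: "pullback ` coboundaries Q (lift S) s (lift T) t = coboundaries M S s T t"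
proof -
  let ?cob = "\<lambda>B d. \<forall>x. d x = (if x \<in> carrier M
            then (\<lambda>i j. if i < t \<and> j < s then (T x * B - B * S x) $$ (i, j) else 0) else 0)"
  let ?cobQ = "\<lambda>B d'. \<forall>A. d' A = (if A \<in> carrier Q
            then (\<lambda>i j. if i < t \<and> j < s then (lift T A * B - B * lift S A) $$ (i, j) else 0) else 0)"
  have pull: "?cob B (pullback d')" if "?cobQ B d'" for B d'
  proof (intro allI)
    fix x show "pullback d' x = (if x \<in> carrier M
            then (\<lambda>i j. if i < t \<and> j < s then (T x * B - B * S x) $$ (i, j) else 0) else 0)"
    proof (cases "x \<in> carrier M")
      case True
      then show ?thesis using that lift_class(1,2)[OF True] carrier_Q unfolding pullback_def
        by (simp add: quotientI cong: if_cong)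
    qed (simp add: pullback_def)
  qed
  have push: "\<exists>d'. ?cobQ B d' \<and> pullback d' = d" if "?cob B d" for B d
  proof (intro exI conjI)
    show "?cobQ B (\<lambda>A. if A \<in> carrier Q
            then (\<lambda>i j. if i < t \<and> j < s then (lift T A * B - B * lift S A) $$ (i, j) else 0) else 0)"
      by simp
    show "pullback (\<lambda>A. if A \<in> carrier Q
            then (\<lambda>i j. if i < t \<and> j < s then (lift T A * B - B * lift S A) $$ (i, j) else 0) else 0) = d"
    proof
      fix x show "pullback (\<lambda>A. if A \<in> carrier Q
            then (\<lambda>i j. if i < t \<and> j < s then (lift T A * B - B * lift S A) $$ (i, j) else 0) else 0) x = d x"
      proof (cases "x \<in> carrier M")
        case True
        then show ?thesis using that lift_class(1,2)[OF True] carrier_Q unfolding pullback_def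
          by (simp add: quotientI cong: if_cong)
      qed (use that in \<open>simp add: pullback_def\<close>)
    qed
  qed
  show ?thesis
  proof
    show "pullback ` coboundaries Q (lift S) s (lift T) t \<subseteq> coboundaries M S s T t"
      using pull unfolding coboundaries_def by blast
    show "coboundaries M S s T t \<subseteq> pullback ` coboundaries Q (lift S) s (lift T) t"
    proof
      fix d assume "d \<in> coboundaries M S s T t"
      then obtain B where "B \<in> carrier_mat t s" "?cob B d" unfolding coboundaries_def by blast
      with push show "d \<in> pullback ` coboundaries Q (lift S) s (lift T) t"
        unfolding coboundaries_def by blast
    qed
  qed
qed

theorem ext1_dim_quot_monoid: "ext1_dim M S s T t = ext1_dim Q (lift S) s (lift T) t"
proof -
  interpret V1: vector_space "fscale :: 'k \<Rightarrow> ('a set \<Rightarrow> nat \<Rightarrow> nat \<Rightarrow> 'k) \<Rightarrow> _"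
    by (rule vector_space_fscale)
  have lin: "Vector_Spaces.linear fscale fscale pullback"
    unfolding Vector_Spaces.linear_iff
  proof (intro conjI allI)
    show "vector_space (fscale :: 'k \<Rightarrow> ('a set \<Rightarrow> nat \<Rightarrow> nat \<Rightarrow> 'k) \<Rightarrow> _)"
      "vector_space (fscale :: 'k \<Rightarrow> ('a \<Rightarrow> nat \<Rightarrow> nat \<Rightarrow> 'k) \<Rightarrow> _)"
      by (rule vector_space_fscale)+
    show "pullback (x + y) = pullback x + pullback y" for x y
      unfolding pullback_def by (simp add: fun_eq_iff)
    show "pullback (fscale c x) = fscale c (pullback x)" for c x
      unfolding pullback_def fscale_def by (simp add: fun_eq_iff)
  qed
  define W where "W = {d' :: 'a set \<Rightarrow> nat \<Rightarrow> nat \<Rightarrow> 'k. \<forall>A. A \<notin> carrier Q \<longrightarrow> d' A = 0}"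
  have "V1.subspace W" unfolding V1.subspace_def W_def fscale_def by (auto simp: fun_eq_iff)
  then have span_W: "V1.span X \<subseteq> W" if "X \<subseteq> W" for X using V1.span_minimal[OF that] by blast
  have "inj_on pullback W"
  proof (rule inj_onI)
    fix d1 d2 assume d: "d1 \<in> W" "d2 \<in> W" "pullback d1 = pullback d2"
    show "d1 = d2"
    proof
      fix A show "d1 A = d2 A"
      proof (cases "A \<in> carrier Q")
        case True
        then obtain x where "x \<in> carrier M" "A = C `` {x}" using carrier_Q by (auto elim: quotientE)
        then show ?thesis using fun_cong[OF d(3), of x] unfolding pullback_def by simp
      qed (use d in \<open>simp add: W_def\<close>)
    qed
  qed
  moreover have "cocycles Q (lift S) s (lift T) t \<subseteq> W" "coboundaries Q (lift S) s (lift T) t \<subseteq> W"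
    unfolding cocycles_def coboundaries_def W_def by auto
  ultimately show ?thesis
    using dim_image_eq_of_inj_on_span[OF lin] pullback_cocycles pullback_coboundaries
      inj_on_subset[OF _ span_W] unfolding ext1_dim_def by metis
qed

end

context finite_rectangular_monoid
begin

lemma compatible_congruence_M_l:
  assumes e1: "e1 \<in> idems G" and e2: "e2 \<in> idems G" and le: "pideal G e1 \<subseteq> pideal G e2"
    and rep1: "is_rep (local_group G e1) \<rho>1 n1" and rep2: "is_rep (local_group G e2) \<rho>2 n2"
  shows "compatible_congruence G (cong_gen G (right_zero_pairs G)) (infl G e1 \<rho>1 n1) n1 (infl G e2 \<rho>2 n2) n2"
proof (rule compatible_congruence.intro)
  have "right_zero_pairs G \<subseteq> carrier G \<times> carrier G" unfolding right_zero_pairs_def by auto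
  then show "is_congruence G (cong_gen G (right_zero_pairs G))" by (rule cong_gen_is_congruence[OF monoid_axioms])
  have pairs: "a \<in> carrier G \<and> b \<in> carrier G \<and> infl G e1 \<rho>1 n1 a = infl G e1 \<rho>1 n1 b \<and>
      infl G e2 \<rho>2 n2 a = infl G e2 \<rho>2 n2 b \<and>
      (\<forall>d\<in>cocycles G (infl G e1 \<rho>1 n1) n1 (infl G e2 \<rho>2 n2) n2. d a = d b)"
    if ab: "(a, b) \<in> right_zero_pairs G" for a b
  proof -
    have p: "(a, b) \<in> right_zero_pairs G \<union> left_zero_pairs G" using ab by simp
    have "a \<in> carrier G" "b \<in> carrier G" using ab unfolding right_zero_pairs_def by auto
    then show ?thesis
      using infl_zero_pair[OF e1 rep1 p] infl_zero_pair[OF e2 rep2 p]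
        right_zero_pair_cocycle_eq[OF e1 e2 le rep1 rep2 ab] by simp
  qed
  show "infl G e1 \<rho>1 n1 x = infl G e1 \<rho>1 n1 y \<and> infl G e2 \<rho>2 n2 x = infl G e2 \<rho>2 n2 y \<and>
      (\<forall>d\<in>cocycles G (infl G e1 \<rho>1 n1) n1 (infl G e2 \<rho>2 n2) n2. d x = d y)"
    if "(x, y) \<in> cong_gen G (right_zero_pairs G)" for x y
    by (rule cong_gen_compatible[OF monoid_axioms is_rep_infl[OF e1 rep1] is_rep_infl[OF e2 rep2] pairs that])
qed (rule monoid_axioms)

lemma compatible_congruence_M_r:
  assumes e1: "e1 \<in> idems G" and e2: "e2 \<in> idems G" and le: "pideal G e1 \<subseteq> pideal G e2"
    and rep1: "is_rep (local_group G e1) \<rho>1 n1" and rep2: "is_rep (local_group G e2) \<rho>2 n2"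
  shows "compatible_congruence G (cong_gen G (left_zero_pairs G)) (infl G e2 \<rho>2 n2) n2 (infl G e1 \<rho>1 n1) n1"
proof (rule compatible_congruence.intro)
  have "left_zero_pairs G \<subseteq> carrier G \<times> carrier G" unfolding left_zero_pairs_def by auto
  then show "is_congruence G (cong_gen G (left_zero_pairs G))" by (rule cong_gen_is_congruence[OF monoid_axioms])
  have pairs: "a \<in> carrier G \<and> b \<in> carrier G \<and> infl G e2 \<rho>2 n2 a = infl G e2 \<rho>2 n2 b \<and>
      infl G e1 \<rho>1 n1 a = infl G e1 \<rho>1 n1 b \<and>
      (\<forall>d\<in>cocycles G (infl G e2 \<rho>2 n2) n2 (infl G e1 \<rho>1 n1) n1. d a = d b)"
    if ab: "(a, b) \<in> left_zero_pairs G" for a b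
  proof -
    have p: "(a, b) \<in> right_zero_pairs G \<union> left_zero_pairs G" using ab by simp
    have "a \<in> carrier G" "b \<in> carrier G" using ab unfolding left_zero_pairs_def by auto
    then show ?thesis
      using infl_zero_pair[OF e1 rep1 p] infl_zero_pair[OF e2 rep2 p]
        left_zero_pair_cocycle_eq[OF e1 e2 le rep1 rep2 ab] by simp
  qed
  show "infl G e2 \<rho>2 n2 x = infl G e2 \<rho>2 n2 y \<and> infl G e1 \<rho>1 n1 x = infl G e1 \<rho>1 n1 y \<and>
      (\<forall>d\<in>cocycles G (infl G e2 \<rho>2 n2) n2 (infl G e1 \<rho>1 n1) n1. d x = d y)"
    if "(x, y) \<in> cong_gen G (left_zero_pairs G)" for x y
    by (rule cong_gen_compatible[OF monoid_axioms is_rep_infl[OF e2 rep2] is_rep_infl[OF e1 rep1] pairs that])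
qed (rule monoid_axioms)

end

theorem mainTheorem12:
  fixes M :: "'a monoid" and eX eY :: 'a
    and \<rho>U :: "'a \<Rightarrow> 'k::field mat" and \<rho>V :: "'a \<Rightarrow> 'k mat" and nU nV :: nat
  assumes "monoid M" and "finite (carrier M)" and "rectangular M"
    and "splits TYPE('k) M"
    and "eX \<in> idems M" and "eY \<in> idems M"
    and "pideal M eX \<subseteq> pideal M eY"
    and "simple_rep (local_group M eX) \<rho>U nU"
    and "simple_rep (local_group M eY) \<rho>V nV"
  shows "ext1_dim M (infl M eX \<rho>U nU) nU (infl M eY \<rho>V nV) nV
           = ext1_dim (M_l M) (infl_quot M eX \<rho>U nU) nU (infl_quot M eY \<rho>V nV) nV
       \<and> ext1_dim M (infl M eY \<rho>V nV) nV (infl M eX \<rho>U nU) nU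
           = ext1_dim (M_r M) (infl_quot M eY \<rho>V nV) nV (infl_quot M eX \<rho>U nU) nU"
proof -
  interpret finite_rectangular_monoid M
    using assms(1-3) by (simp add: finite_rectangular_monoid_def finite_rectangular_monoid_axioms_def
        finite_monoid_def finite_monoid_axioms_def)
  have repU: "is_rep (local_group M eX) \<rho>U nU" and repV: "is_rep (local_group M eY) \<rho>V nV"
    using assms(8,9) unfolding simple_rep_def by simp_all
  have lift: "infl_quot M e \<rho> n = (\<lambda>A. infl M e \<rho> n (SOME m. m \<in> A))" for e and \<rho> :: "'a \<Rightarrow> 'k mat" and n
    by (simp add: fun_eq_iff infl_quot_def)
  show ?thesis
    using compatible_congruence.ext1_dim_quot_monoid[OF compatible_congruence_M_l[OF assms(5-7) repU repV]]
      compatible_congruence.ext1_dim_quot_monoid[OF compatible_congruence_M_r[OF assms(5-7) repU repV]]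
    unfolding M_l_def M_r_def lift by simp
qed

end
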